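(* Let $p\in(0,1)$, let $d_p\in(0,1)$ be the $(1-p)$-quantile of $K_{\hat\vartheta}=\sup_{x\in\mathbb{R}}|F_{\hat\vartheta}(x)-F_\vartheta(x)|$, and define $$C_4'=\Big\{\tilde\vartheta\in\Theta:\ \sup_{x\in\mathbb{R}}|F_{\tilde\vartheta}(x)-F_{\hat\vartheta}(x)|\le d_p\Big\},\qquad C_4''=\{(\mu,\sigma)\in C_4':\ \mu\le\hat\mu\}.$$ Let $h:(0,\infty)\to\mathbb{R}$, $h(x)=\ln\big(\frac{d_p}{|1-x|}\big)(x-1)+x\ln x$ for $x\ne1$ and $h(1)=0$, and for $x>0$ $$u(x)=\begin{cases}h(x),&x<1-d_p\\ x\ln(1-d_p),&x\ge1-d_p\end{cases},\qquad o(x)=\begin{cases}-\ln(1-d_p),&x\le\frac1{1-d_p}\\ h(x),&x>\frac1{1-d_p}\end{cases}.$$ Then $$C_4'=\Big\{(\mu,\sigma)\in\Theta:\ u\big(\tfrac{\hat\sigma}{\sigma}\big)\le\frac{\hat\mu-\mu}{\sigma}\le o\big(\tfrac{\hat\sigma}{\sigma}\big)\Big\},$$ $$C_4''=\Big\{(\mu,\sigma)\in\Theta:\ \max\big\{u\big(\tfrac{\hat\sigma}{\sigma}\big),0\big\}\le\frac{\hat\mu-\mu}{\sigma}\le o\big(\tfrac{\hat\sigma}{\sigma}\big)\Big\}.$$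
   Context: Let $1<m\le n$ be integers and $(R_1,\dots,R_m)\in\mathbb{N}_0^m$ with $\sum_{j=1}^mR_j=n-m$; set $\gamma_j=\sum_{i=j}^m(R_i+1)$. A sample of progressively type-II censored order statistics $X=(X_{1:m:n},\dots,X_{m:m:n})$ from an absolutely continuous cdf $F$ with density $f$ has joint density $\prod_{j=1}^m\gamma_jf(x_j)[1-F(x_j)]^{R_j}$ on $x_1\le\dots\le x_m$. Here $F=F_\vartheta$ belongs to the exponential location-scale family: for $\vartheta=(\mu,\sigma)\in\Theta=\mathbb{R}\times(0,\infty)$, $F_\vartheta(x)=1-\exp\{-(x-\mu)/\sigma\}$ for $x>\mu$ and $F_\vartheta(x)=0$ for $x\le\mu$; $\vartheta$ is unknown. The MLEs are $\hat\mu=X_{1:m:n}$ and $\hat\sigma=\frac1m\sum_{j=2}^m\gamma_j(X_{j:m:n}-X_{j-1:m:n})$, and $\hat\vartheta=(\hat\mu,\hat\sigma)$. The distribution of $K_{\hat\vartheta}$ does not depend on $\vartheta$. *)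

theory Defs
  imports Complex_Main
begin

definition Fexp :: "real \<times> real \<Rightarrow> real \<Rightarrow> real" where
  "Fexp \<theta> x = (if x > fst \<theta> then 1 - exp (- (x - fst \<theta>) / snd \<theta>) else 0)"

definition Theta :: "(real \<times> real) set" where
  "Theta = {(\<mu>, \<sigma>). \<sigma> > 0}"

definition KS_dist :: "real \<times> real \<Rightarrow> real \<times> real \<Rightarrow> real" where
  "KS_dist a b = (SUP x::real. \<bar>Fexp a x - Fexp b x\<bar>)"

definition C4' :: "real \<Rightarrow> real \<times> real \<Rightarrow> (real \<times> real) set" where
  "C4' d \<theta>hat = {\<theta> \<in> Theta. KS_dist \<theta> \<theta>hat \<le> d}"

definition C4'' :: "real \<Rightarrow> real \<times> real \<Rightarrow> (real \<times> real) set" where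
  "C4'' d \<theta>hat = {(\<mu>, \<sigma>) \<in> C4' d \<theta>hat. \<mu> \<le> fst \<theta>hat}"

definition hfun :: "real \<Rightarrow> real \<Rightarrow> real" where
  "hfun d x = (if x = 1 then 0 else ln (d / \<bar>1 - x\<bar>) * (x - 1) + x * ln x)"

definition ufun :: "real \<Rightarrow> real \<Rightarrow> real" where
  "ufun d x = (if x < 1 - d then hfun d x else x * ln (1 - d))"

definition ofun :: "real \<Rightarrow> real \<Rightarrow> real" where
  "ofun d x = (if x \<le> 1 / (1 - d) then - ln (1 - d) else hfun d x)"

end

theory Submission
  imports Defs "HOL-Analysis.Analysis"
begin

(* Standardising by x = \<mu> + \<sigma> * y turns KS_dist \<le> d into the requirement that
   Fexp (0, 1) - Fexp (a, s), with a = (\<mu>hat - \<mu>) / \<sigma> and s = \<sigma>hat / \<sigma>, takes values in [-d, d].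
   For y \<ge> max 0 a this difference is exp (-(y - a) / s) - exp (-y), i.e. c * t powr (1/s) - t
   in t = exp (-y), which is concave for s \<ge> 1. Hence its supremum over [max 0 a, \<infinity>) is attained
   either at the left end point or at the stationary point; these two candidates produce the two
   branches of ofun. The lower bound is the upper bound with the two distributions interchanged,
   which replaces (a, s) by (-a/s, 1/s), and s * hfun d (1/s) = - hfun d s turns ofun into ufun. *)

lemma Fexp_eq_0: "x \<le> \<mu> \<Longrightarrow> Fexp (\<mu>, \<sigma>) x = 0"
  by (simp add: Fexp_def)

lemma Fexp_eq_exp: "\<mu> \<le> x \<Longrightarrow> Fexp (\<mu>, \<sigma>) x = 1 - exp (- (x - \<mu>) / \<sigma>)"
  by (cases "x = \<mu>") (simp_all add: Fexp_def)

lemma Fexp_nonneg: "\<sigma> > 0 \<Longrightarrow> 0 \<le> Fexp (\<mu>, \<sigma>) x"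
  by (simp add: Fexp_def divide_nonpos_pos)

lemma Fexp_le_one: "Fexp \<theta> x \<le> 1"
  by (simp add: Fexp_def)

lemma mono_Fexp:
  assumes "\<sigma> > 0"
  shows "mono (Fexp (\<mu>, \<sigma>))"
proof (rule monoI)
  fix x y :: real
  assume "x \<le> y"
  show "Fexp (\<mu>, \<sigma>) x \<le> Fexp (\<mu>, \<sigma>) y"
  proof (cases "x \<le> \<mu>")
    case True
    then show ?thesis using Fexp_nonneg[OF assms] by (simp add: Fexp_eq_0)
  next
    case False
    have "- (y - \<mu>) / \<sigma> \<le> - (x - \<mu>) / \<sigma>"
      using \<open>x \<le> y\<close> assms by (intro divide_right_mono) auto
    then show ?thesis using False \<open>x \<le> y\<close> by (simp add: Fexp_eq_exp)
  qed
qed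

lemma Fexp_affine:
  assumes "\<sigma> > 0"
  shows "Fexp (\<mu> + \<sigma> * a, \<sigma> * s) (\<mu> + \<sigma> * y) = Fexp (a, s) y"
proof -
  have "\<mu> + \<sigma> * y - (\<mu> + \<sigma> * a) = \<sigma> * (y - a)"
    by (simp add: algebra_simps)
  then have "- (\<mu> + \<sigma> * y - (\<mu> + \<sigma> * a)) / (\<sigma> * s) = - (y - a) / s"
    using assms by (simp only: minus_mult_right mult_divide_mult_cancel_left_if) simp
  then show ?thesis using assms by (simp add: Fexp_def)
qed

lemma all_affine_iff:
  fixes \<mu> \<sigma> :: real
  assumes "\<sigma> \<noteq> 0"
  shows "(\<forall>x. P x) \<longleftrightarrow> (\<forall>y. P (\<mu> + \<sigma> * y))"
proof (intro iffI allI)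
  fix y
  assume "\<forall>x. P x"
  then show "P (\<mu> + \<sigma> * y)" ..
next
  fix x
  assume "\<forall>y. P (\<mu> + \<sigma> * y)"
  moreover have "x = \<mu> + \<sigma> * ((x - \<mu>) / \<sigma>)" using assms by simp
  ultimately show "P x" by metis
qed

lemma exp_scaled_le:
  fixes l u :: real
  assumes "0 \<le> l" "l \<le> 1"
  shows "exp (l * u) \<le> 1 + l * (exp u - 1)"
  using convex_onD[OF exp_convex, of l 0 u] assms by (simp add: algebra_simps)

definition expdiff :: "real \<Rightarrow> real \<Rightarrow> real \<Rightarrow> real" where
  "expdiff a s y = exp (- (y - a) / s) - exp (- y)"

(* The stationary point of expdiff a s for s \<noteq> 1, where s * exp (-y) = exp (-(y - a) / s). *)
definition expdiff_crit :: "real \<Rightarrow> real \<Rightarrow> real" where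
  "expdiff_crit a s = (a - s * ln s) / (1 - s)"

lemma Fexp_diff_eq_expdiff:
  "max 0 a \<le> y \<Longrightarrow> Fexp (0, 1) y - Fexp (a, s) y = expdiff a s y"
  by (simp add: Fexp_eq_exp expdiff_def)

lemma expdiff_crit_shift:
  assumes "s > 0" "s \<noteq> 1"
  shows "expdiff_crit a s - a = s * (expdiff_crit a s - ln s)"
  using assms by (simp add: expdiff_crit_def field_simps)

lemma exp_at_expdiff_crit:
  assumes "s > 0" "s \<noteq> 1"
  shows "exp (- (expdiff_crit a s - a) / s) = s * exp (- expdiff_crit a s)"
proof -
  have "- (expdiff_crit a s - a) / s = ln s + - expdiff_crit a s"
    using expdiff_crit_shift[OF assms, of a] assms(1) by simp
  then show ?thesis using assms(1) by (simp only: exp_add exp_ln)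
qed

lemma expdiff_at_crit:
  assumes "s > 0" "s \<noteq> 1"
  shows "expdiff a s (expdiff_crit a s) = (s - 1) * exp (- expdiff_crit a s)"
  using exp_at_expdiff_crit[OF assms] by (simp add: expdiff_def algebra_simps)

lemma exp_slope_le_of_crit_le:
  assumes "s > 1" "expdiff_crit a s \<le> y"
  shows "s * exp (- y) \<le> exp (- (y - a) / s)"
proof -
  have "y * (1 - s) \<le> expdiff_crit a s * (1 - s)"
    using assms by (intro mult_right_mono_neg) auto
  also have "\<dots> = a - s * ln s"
    using assms(1) by (simp add: expdiff_crit_def)
  finally have "ln s + - y \<le> - (y - a) / s"
    using assms(1) by (simp add: field_simps)
  then have "exp (ln s + - y) \<le> exp (- (y - a) / s)"
    by (simp only: exp_le_cancel_iff)
  moreover have "exp (ln s + - y) = s * exp (- y)"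
    using assms(1) by (simp add: exp_diff exp_minus divide_inverse)
  ultimately show ?thesis by linarith
qed

(* The tangent inequality of the concave map t \<mapsto> t powr (1/s) at t = exp (-y0). *)
lemma exp_scaled_tangent:
  fixes s y y0 a :: real
  assumes "s \<ge> 1"
  shows "s * exp (- y0) * (exp (- (y - a) / s) - exp (- (y0 - a) / s))
           \<le> exp (- (y0 - a) / s) * (exp (- y) - exp (- y0))"
proof -
  define w where "w = y - y0"
  have "exp ((1 / s) * - w) \<le> 1 + (1 / s) * (exp (- w) - 1)"
    using exp_scaled_le[of "1 / s" "- w"] assms by simp
  then have "s * (exp ((1 / s) * - w) - 1) \<le> exp (- w) - 1"
    using assms by (simp add: field_simps)
  then have "exp (- y0) * exp (- (y0 - a) / s) * (s * (exp ((1 / s) * - w) - 1))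
               \<le> exp (- y0) * exp (- (y0 - a) / s) * (exp (- w) - 1)"
    by (intro mult_left_mono) auto
  moreover have "exp (- (y - a) / s) = exp (- (y0 - a) / s) * exp ((1 / s) * - w)"
    unfolding w_def by (simp add: exp_add[symmetric] add_divide_distrib[symmetric])
  moreover have "exp (- y) = exp (- y0) * exp (- w)"
    unfolding w_def by (simp add: exp_add[symmetric])
  ultimately show ?thesis by (simp add: algebra_simps)
qed

lemma expdiff_le_at_crit:
  assumes "s > 1"
  shows "expdiff a s y \<le> expdiff a s (expdiff_crit a s)"
proof -
  let ?c = "expdiff_crit a s"
  have "s * exp (- ?c) * (exp (- (y - a) / s) - exp (- (?c - a) / s))
          \<le> s * exp (- ?c) * (exp (- y) - exp (- ?c))"
    using exp_scaled_tangent[of s ?c y a] exp_at_expdiff_crit[of s a] assms by simp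
  then have "exp (- (y - a) / s) - exp (- (?c - a) / s) \<le> exp (- y) - exp (- ?c)"
    using assms by simp
  then show ?thesis by (simp add: expdiff_def)
qed

lemma expdiff_antimono_beyond_crit:
  assumes "s > 1" "expdiff_crit a s \<le> y0" "y0 \<le> y"
  shows "expdiff a s y \<le> expdiff a s y0"
proof -
  have "s * exp (- y0) * (exp (- (y - a) / s) - exp (- (y0 - a) / s))
          \<le> exp (- (y0 - a) / s) * (exp (- y) - exp (- y0))"
    using exp_scaled_tangent[of s y0 y a] assms by simp
  also have "\<dots> \<le> s * exp (- y0) * (exp (- y) - exp (- y0))"
    using exp_slope_le_of_crit_le[OF assms(1,2)] assms(3)
    by (intro mult_right_mono_neg) auto
  finally have "exp (- (y - a) / s) - exp (- (y0 - a) / s) \<le> exp (- y) - exp (- y0)"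
    using assms by simp
  then show ?thesis by (simp add: expdiff_def)
qed

lemma expdiff_at_crit_le_iff:
  assumes "s > 1" "d > 0"
  shows "expdiff a s (expdiff_crit a s) \<le> d \<longleftrightarrow> a \<le> hfun d s"
proof -
  let ?c = "expdiff_crit a s"
  have "expdiff a s ?c = exp (ln (s - 1) - ?c)"
    using expdiff_at_crit[of s a] assms by (simp add: exp_diff exp_minus divide_inverse)
  then have "expdiff a s ?c \<le> d \<longleftrightarrow> ln (s - 1) - ?c \<le> ln d"
    using assms(2) by (metis exp_le_cancel_iff exp_ln)
  also have "\<dots> \<longleftrightarrow> (a - s * ln s) / (s - 1) \<le> ln d - ln (s - 1)"
    unfolding expdiff_crit_def using assms by (simp add: field_simps)
  also have "\<dots> \<longleftrightarrow> a - s * ln s \<le> (ln d - ln (s - 1)) * (s - 1)"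
    using assms by (simp add: pos_divide_le_eq)
  also have "\<dots> \<longleftrightarrow> a \<le> hfun d s"
    unfolding hfun_def using assms by (simp add: ln_div algebra_simps)
  finally show ?thesis .
qed

lemma one_minus_exp_le_iff:
  fixes a d :: real
  assumes "d < 1"
  shows "1 - exp (- a) \<le> d \<longleftrightarrow> a \<le> - ln (1 - d)"
proof -
  have "exp (ln (1 - d)) = 1 - d"
    using assms by (intro exp_ln) simp
  then have "1 - exp (- a) \<le> d \<longleftrightarrow> exp (ln (1 - d)) \<le> exp (- a)"
    by linarith
  also have "\<dots> \<longleftrightarrow> a \<le> - ln (1 - d)"
    by (simp only: exp_le_cancel_iff) linarith
  finally show ?thesis .
qed

lemma expdiff_at_max_le_iff:
  assumes "s > 0" "0 < d" "d < 1"
  shows "expdiff a s (max 0 a) \<le> d \<longleftrightarrow> a \<le> - ln (1 - d)"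
proof (cases "0 \<le> a")
  case True
  then show ?thesis using one_minus_exp_le_iff[OF assms(3)] by (simp add: expdiff_def)
next
  case False
  have "exp (a / s) \<le> 1" "0 < - ln (1 - d)"
    using False assms by (simp_all add: divide_nonpos_pos)
  moreover have "expdiff a s (max 0 a) = exp (a / s) - 1"
    using False by (simp add: expdiff_def)
  ultimately show ?thesis using False assms(2) by linarith
qed

lemma expdiff_le_of_scale_le_one:
  assumes "0 < s" "s \<le> 1" "max 0 a \<le> y"
  shows "expdiff a s y \<le> max 0 (1 - exp (- a))"
proof -
  have "(y - a) * s \<le> y - a"
    using assms by (simp add: mult_left_le)
  then have "- (y - a) / s \<le> a + - y"
    using assms(1) by (simp add: field_simps)
  then have "expdiff a s y \<le> exp (a + - y) - exp (- y)"
    by (simp add: expdiff_def)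
  also have "\<dots> = (exp a - 1) * exp (- y)"
    by (simp add: exp_diff exp_minus divide_inverse algebra_simps)
  also have "\<dots> \<le> max 0 (1 - exp (- a))"
  proof (cases "0 \<le> a")
    case True
    have "(exp a - 1) * exp (- y) \<le> (exp a - 1) * exp (- a)"
      using True assms(3) by (intro mult_left_mono) auto
    also have "\<dots> = 1 - exp (- a)"
      by (simp add: algebra_simps exp_minus)
    finally show ?thesis by simp
  next
    case False
    then show ?thesis by (simp add: mult_nonpos_nonneg)
  qed
  finally show ?thesis .
qed

lemma ln_le_expdiff_crit:
  assumes "s > 1" "a \<le> expdiff_crit a s"
  shows "ln s \<le> expdiff_crit a s"
proof -
  have "0 \<le> s * (expdiff_crit a s - ln s)"
    using expdiff_crit_shift[of s a] assms by simp
  then show ?thesis using assms(1) by (simp add: zero_le_mult_iff)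
qed

lemma max_le_expdiff_crit:
  assumes "s > 1" "a \<le> ln s"
  shows "max 0 a \<le> expdiff_crit a s"
proof -
  let ?c = "expdiff_crit a s"
  have "(?c - ln s) * (1 - s) = a - ln s"
    using expdiff_crit_shift[of s a] assms(1) by (simp add: algebra_simps)
  then have ln_le: "ln s \<le> ?c"
    using assms by (smt (verit) mult_le_0_iff)
  then have "0 \<le> s * (?c - ln s)"
    using assms(1) by simp
  then have "a \<le> ?c"
    using expdiff_crit_shift[of s a] assms(1) by simp
  then show ?thesis using ln_le ln_gt_zero[OF assms(1)] by simp
qed

lemma expdiff_bounded_iff_of_scale_le:
  assumes "0 < s" "s \<le> 1 / (1 - d)" "0 < d" "d < 1"
  shows "(\<forall>y\<ge>max 0 a. expdiff a s y \<le> d) \<longleftrightarrow> a \<le> - ln (1 - d)"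
proof
  assume "\<forall>y\<ge>max 0 a. expdiff a s y \<le> d"
  then have "expdiff a s (max 0 a) \<le> d"
    by simp
  then show "a \<le> - ln (1 - d)"
    using expdiff_at_max_le_iff[OF assms(1,3,4)] by simp
next
  assume a_le: "a \<le> - ln (1 - d)"
  show "\<forall>y\<ge>max 0 a. expdiff a s y \<le> d"
  proof (intro allI impI)
    fix y
    assume y: "max 0 a \<le> y"
    let ?c = "expdiff_crit a s"
    consider "s \<le> 1" | "1 < s" "?c \<le> max 0 a" | "1 < s" "max 0 a < ?c"
      by linarith
    then show "expdiff a s y \<le> d"
    proof cases
      case 1
      then show ?thesis
        using expdiff_le_of_scale_le_one[OF assms(1) 1 y] one_minus_exp_le_iff[OF assms(4), of a]
          a_le assms(3) by linarith
    next
      case 2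
      then show ?thesis
        using expdiff_antimono_beyond_crit[OF 2 y] expdiff_at_max_le_iff[OF assms(1,3,4), of a] a_le
        by linarith
    next
      case 3
      have "ln s \<le> ?c"
        using 3 by (intro ln_le_expdiff_crit) auto
      then have "exp (- ?c) \<le> exp (- ln s)"
        by simp
      then have "(s - 1) * exp (- ?c) \<le> (s - 1) * (1 / s)"
        using 3(1) assms(1) by (intro mult_left_mono) (auto simp: exp_minus inverse_eq_divide)
      also have "\<dots> \<le> d"
        using assms by (simp add: field_simps)
      finally show ?thesis
        using expdiff_le_at_crit[OF 3(1), of a y] expdiff_at_crit[of s a] 3(1) by simp
    qed
  qed
qed

lemma expdiff_bounded_iff_of_scale_gt:
  assumes "1 / (1 - d) < s" "0 < d" "d < 1"
  shows "(\<forall>y\<ge>max 0 a. expdiff a s y \<le> d) \<longleftrightarrow> a \<le> hfun d s"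
proof -
  have "1 \<le> 1 / (1 - d)"
    using assms by simp
  then have s_gt: "1 < s"
    using assms(1) by linarith
  have "ln (1 / (1 - d)) < ln s"
    using assms s_gt by (subst ln_less_cancel_iff) auto
  then have ln_gt: "- ln (1 - d) < ln s"
    using assms by (simp add: ln_div)
  show ?thesis
  proof
    assume bounded: "\<forall>y\<ge>max 0 a. expdiff a s y \<le> d"
    then have "a \<le> - ln (1 - d)"
      using expdiff_at_max_le_iff[of s d a] s_gt assms by auto
    then have "max 0 a \<le> expdiff_crit a s"
      using max_le_expdiff_crit[OF s_gt] ln_gt by simp
    then have "expdiff a s (expdiff_crit a s) \<le> d"
      using bounded by simp
    then show "a \<le> hfun d s"
      using expdiff_at_crit_le_iff[OF s_gt assms(2)] by simp
  next
    assume "a \<le> hfun d s"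
    then have "expdiff a s (expdiff_crit a s) \<le> d"
      using expdiff_at_crit_le_iff[OF s_gt assms(2)] by simp
    then show "\<forall>y\<ge>max 0 a. expdiff a s y \<le> d"
      using expdiff_le_at_crit[OF s_gt] order_trans by blast
  qed
qed

lemma Fexp_excess_bounded_iff_expdiff:
  assumes "s > 0" "0 \<le> d"
  shows "(\<forall>y. Fexp (0, 1) y - Fexp (a, s) y \<le> d) \<longleftrightarrow> (\<forall>y\<ge>max 0 a. expdiff a s y \<le> d)"
proof
  assume "\<forall>y. Fexp (0, 1) y - Fexp (a, s) y \<le> d"
  then show "\<forall>y\<ge>max 0 a. expdiff a s y \<le> d"
    using Fexp_diff_eq_expdiff by metis
next
  assume bounded: "\<forall>y\<ge>max 0 a. expdiff a s y \<le> d"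
  show "\<forall>y. Fexp (0, 1) y - Fexp (a, s) y \<le> d"
  proof
    fix y
    consider "max 0 a \<le> y" | "y < a" "0 \<le> a" | "y < 0" "a < 0"
      by linarith
    then show "Fexp (0, 1) y - Fexp (a, s) y \<le> d"
    proof cases
      case 1
      then show ?thesis using bounded Fexp_diff_eq_expdiff by simp
    next
      case 2
      have "Fexp (0, 1) y - Fexp (a, s) y = Fexp (0, 1) y"
        using 2 by (simp add: Fexp_eq_0)
      also have "\<dots> \<le> Fexp (0, 1) a"
        using mono_Fexp[of 1 0] 2 by (simp add: monoD)
      also have "\<dots> = expdiff a s a"
        using Fexp_diff_eq_expdiff[of a a s] 2 by (simp add: Fexp_eq_0)
      also have "\<dots> \<le> d"
        using bounded 2 by simp
      finally show ?thesis .
    next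
      case 3
      then show ?thesis
        using Fexp_nonneg[OF assms(1), of a y] assms(2) by (simp add: Fexp_eq_0)
    qed
  qed
qed

lemma Fexp_excess_bounded_iff_ofun:
  assumes "s > 0" "0 < d" "d < 1"
  shows "(\<forall>y. Fexp (0, 1) y - Fexp (a, s) y \<le> d) \<longleftrightarrow> a \<le> ofun d s"
proof (cases "s \<le> 1 / (1 - d)")
  case True
  then show ?thesis
    using Fexp_excess_bounded_iff_expdiff expdiff_bounded_iff_of_scale_le assms
    by (simp add: ofun_def)
next
  case False
  then show ?thesis
    using Fexp_excess_bounded_iff_expdiff expdiff_bounded_iff_of_scale_gt assms
    by (simp add: ofun_def)
qed

lemma hfun_inverse:
  assumes "d > 0" "s > 0"
  shows "hfun d (1 / s) = - hfun d s / s"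
proof (cases "s = 1")
  case True
  then show ?thesis by (simp add: hfun_def)
next
  case False
  define L where "L = ln (d / \<bar>1 - s\<bar>)"
  have "\<bar>1 - 1 / s\<bar> = \<bar>1 - s\<bar> / s"
    using assms(2) by (simp add: field_simps abs_minus_commute)
  then have ln_eq: "ln (d / \<bar>1 - 1 / s\<bar>) = L + ln s"
    using assms False by (simp add: L_def ln_mult ln_div)
  have "1 / s \<noteq> 1"
    using False by simp
  then have "hfun d (1 / s) = ln (d / \<bar>1 - 1 / s\<bar>) * (1 / s - 1) + 1 / s * ln (1 / s)"
    by (simp only: hfun_def if_not_P if_False)
  also have "\<dots> = (L + ln s) * (1 / s - 1) - ln s / s"
    unfolding ln_eq using assms(2) by (simp add: ln_div)
  also have "\<dots> = - (L * (s - 1) + s * ln s) / s"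
    using assms(2) by (simp add: field_simps)
  also have "\<dots> = - hfun d s / s"
    using False by (simp add: hfun_def L_def)
  finally show ?thesis .
qed

lemma ofun_inverse_le_iff:
  assumes "s > 0" "0 < d" "d < 1"
  shows "- a / s \<le> ofun d (1 / s) \<longleftrightarrow> ufun d s \<le> a"
proof (cases "s < 1 - d")
  case True
  then have "1 / (1 - d) < 1 / s"
    using assms by (intro divide_strict_left_mono) auto
  then have "\<not> 1 / s \<le> 1 / (1 - d)"
    by linarith
  then show ?thesis
    using True assms by (simp add: ofun_def ufun_def hfun_inverse divide_le_cancel)
next
  case False
  then have "1 / s \<le> 1 / (1 - d)"
    using assms by (intro divide_left_mono) auto
  then show ?thesis
    using False assms by (simp add: ofun_def ufun_def field_simps)
qed

lemma Fexp_deficit_bounded_iff_ufun: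
  assumes "s > 0" "0 < d" "d < 1"
  shows "(\<forall>y. Fexp (a, s) y - Fexp (0, 1) y \<le> d) \<longleftrightarrow> ufun d s \<le> a"
proof -
  have "Fexp (a, s) (a + s * z) = Fexp (0, 1) z" for z
    using Fexp_affine[OF assms(1), of a 0 1 z] by simp
  moreover have "Fexp (0, 1) (a + s * z) = Fexp (- a / s, 1 / s) z" for z
    using Fexp_affine[OF assms(1), of a "- a / s" "1 / s" z] assms(1) by simp
  ultimately have "(\<forall>y. Fexp (a, s) y - Fexp (0, 1) y \<le> d)
      \<longleftrightarrow> (\<forall>z. Fexp (0, 1) z - Fexp (- a / s, 1 / s) z \<le> d)"
    using all_affine_iff[of s "\<lambda>y. Fexp (a, s) y - Fexp (0, 1) y \<le> d" a] assms(1) by simp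
  also have "\<dots> \<longleftrightarrow> - a / s \<le> ofun d (1 / s)"
    using Fexp_excess_bounded_iff_ofun[of "1 / s" d "- a / s"] assms by simp
  also have "\<dots> \<longleftrightarrow> ufun d s \<le> a"
    by (rule ofun_inverse_le_iff[OF assms])
  finally show ?thesis .
qed

lemma KS_dist_le_iff:
  assumes "\<sigma> > 0" "\<sigma>hat > 0" "0 < d" "d < 1"
  shows "KS_dist (\<mu>, \<sigma>) (\<mu>hat, \<sigma>hat) \<le> d \<longleftrightarrow>
           ufun d (\<sigma>hat / \<sigma>) \<le> (\<mu>hat - \<mu>) / \<sigma> \<and> (\<mu>hat - \<mu>) / \<sigma> \<le> ofun d (\<sigma>hat / \<sigma>)"
proof -
  define a s where "a = (\<mu>hat - \<mu>) / \<sigma>" and "s = \<sigma>hat / \<sigma>"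
  have s_pos: "s > 0"
    using assms by (simp add: s_def)
  have "\<bar>Fexp (\<mu>, \<sigma>) x - Fexp (\<mu>hat, \<sigma>hat) x\<bar> \<le> 1" for x
    using Fexp_nonneg[OF assms(1), of \<mu> x] Fexp_nonneg[OF assms(2), of \<mu>hat x]
      Fexp_le_one[of "(\<mu>, \<sigma>)" x] Fexp_le_one[of "(\<mu>hat, \<sigma>hat)" x] by linarith
  then have bdd: "bdd_above (range (\<lambda>x. \<bar>Fexp (\<mu>, \<sigma>) x - Fexp (\<mu>hat, \<sigma>hat) x\<bar>))"
    by (intro bdd_aboveI2)
  have "Fexp (\<mu>, \<sigma>) (\<mu> + \<sigma> * y) = Fexp (0, 1) y" for y
    using Fexp_affine[OF assms(1), of \<mu> 0 1 y] by simp
  moreover have "Fexp (\<mu>hat, \<sigma>hat) (\<mu> + \<sigma> * y) = Fexp (a, s) y" for y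
    using Fexp_affine[OF assms(1), of \<mu> a s y] assms(1) by (simp add: a_def s_def)
  ultimately have "(\<forall>x. \<bar>Fexp (\<mu>, \<sigma>) x - Fexp (\<mu>hat, \<sigma>hat) x\<bar> \<le> d)
      \<longleftrightarrow> (\<forall>y. \<bar>Fexp (0, 1) y - Fexp (a, s) y\<bar> \<le> d)"
    using all_affine_iff[of \<sigma> "\<lambda>x. \<bar>Fexp (\<mu>, \<sigma>) x - Fexp (\<mu>hat, \<sigma>hat) x\<bar> \<le> d" \<mu>] assms(1)
    by simp
  also have "\<dots> \<longleftrightarrow> (\<forall>y. Fexp (0, 1) y - Fexp (a, s) y \<le> d) \<and> (\<forall>y. Fexp (a, s) y - Fexp (0, 1) y \<le> d)"
    by (auto simp: abs_le_iff)
  also have "\<dots> \<longleftrightarrow> ufun d s \<le> a \<and> a \<le> ofun d s"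
    using Fexp_excess_bounded_iff_ofun[OF s_pos assms(3,4)] Fexp_deficit_bounded_iff_ufun[OF s_pos assms(3,4)]
    by blast
  finally show ?thesis
    unfolding KS_dist_def a_def s_def using cSUP_le_iff[OF _ bdd] by simp
qed

theorem theorem4:
  fixes d \<mu>hat \<sigma>hat :: real
  assumes "0 < d" and "d < 1" and "\<sigma>hat > 0"
  shows "C4' d (\<mu>hat, \<sigma>hat) =
           {(\<mu>, \<sigma>) \<in> Theta. ufun d (\<sigma>hat / \<sigma>) \<le> (\<mu>hat - \<mu>) / \<sigma> \<and>
                            (\<mu>hat - \<mu>) / \<sigma> \<le> ofun d (\<sigma>hat / \<sigma>)}
       \<and> C4'' d (\<mu>hat, \<sigma>hat) =
           {(\<mu>, \<sigma>) \<in> Theta. max (ufun d (\<sigma>hat / \<sigma>)) 0 \<le> (\<mu>hat - \<mu>) / \<sigma> \<and>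
                            (\<mu>hat - \<mu>) / \<sigma> \<le> ofun d (\<sigma>hat / \<sigma>)}"
proof -
  have C4': "(\<mu>, \<sigma>) \<in> C4' d (\<mu>hat, \<sigma>hat) \<longleftrightarrow> \<sigma> > 0 \<and>
      ufun d (\<sigma>hat / \<sigma>) \<le> (\<mu>hat - \<mu>) / \<sigma> \<and> (\<mu>hat - \<mu>) / \<sigma> \<le> ofun d (\<sigma>hat / \<sigma>)" for \<mu> \<sigma>
    using KS_dist_le_iff[of \<sigma> \<sigma>hat d \<mu> \<mu>hat] assms by (auto simp: C4'_def Theta_def)
  have "\<mu> \<le> \<mu>hat \<longleftrightarrow> 0 \<le> (\<mu>hat - \<mu>) / \<sigma>" if "\<sigma> > 0" for \<mu> \<sigma> :: real
    using that by (simp add: zero_le_divide_iff)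
  then show ?thesis
    by (auto simp: C4' C4''_def Theta_def)
qed

end
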